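(* Let $\{a,b\}$ be a $2$-element generating set of a finite abelian group $G$ such that $\mathrm{Cay}(G;a,b)$ does not have a hamiltonian cycle, $|G|$ is even, and $|G:\langle a-b\rangle|$ is odd. If $P$ and $P'$ are two arc-disjoint hamiltonian paths in $\mathrm{Cay}(G;a,b)$, with initial vertices $\iota$ and $\iota'$ and terminal vertices $\tau$ and $\tau'$ respectively, then $\iota'+\tau'=\iota+\tau$.
   Context: The Cayley digraph $\mathrm{Cay}(G;a,b)$ has vertex set $G$ and an arc from $v$ to $v+s$ for all $v\in G$, $s\in\{a,b\}$. A hamiltonian path (resp. cycle) is a directed path (resp. directed cycle) visiting every vertex exactly once; the initial and terminal vertices of a path are its first and last vertices. Arc-disjoint means sharing no arc. *)

theory Defs
  imports Main
begin

inductive_set gen_subgroup :: "'a::ab_group_add set \<Rightarrow> 'a set" for S where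
  base: "x \<in> S \<Longrightarrow> x \<in> gen_subgroup S"
| zero: "0 \<in> gen_subgroup S"
| add: "x \<in> gen_subgroup S \<Longrightarrow> y \<in> gen_subgroup S \<Longrightarrow> x + y \<in> gen_subgroup S"
| neg: "x \<in> gen_subgroup S \<Longrightarrow> - x \<in> gen_subgroup S"

definition cay_arc :: "'a::ab_group_add \<Rightarrow> 'a \<Rightarrow> 'a \<Rightarrow> 'a \<Rightarrow> bool" where
  "cay_arc a b u v \<longleftrightarrow> v = u + a \<or> v = u + b"

definition ham_path :: "'a::{ab_group_add,finite} \<Rightarrow> 'a \<Rightarrow> 'a list \<Rightarrow> bool" where
  "ham_path a b vs \<longleftrightarrow> distinct vs \<and> set vs = UNIV \<and>
     (\<forall>i. Suc i < length vs \<longrightarrow> cay_arc a b (vs ! i) (vs ! Suc i))"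

definition path_arcs :: "'a list \<Rightarrow> ('a \<times> 'a) set" where
  "path_arcs vs = {(vs ! i, vs ! Suc i) | i. Suc i < length vs}"

definition ham_cycle :: "'a::{ab_group_add,finite} \<Rightarrow> 'a \<Rightarrow> 'a list \<Rightarrow> bool" where
  "ham_cycle a b vs \<longleftrightarrow> ham_path a b vs \<and> vs \<noteq> [] \<and> cay_arc a b (last vs) (hd vs)"

definition subgroup_index :: "'a::finite set \<Rightarrow> nat" where
  "subgroup_index H = card (UNIV :: 'a set) div card H"

end

theory Submission
  imports Defs "HOL-Combinatorics.Cycles"
begin

(* Let h = a - b and m its order. Close a Hamiltonian path P into the |G|-cycle succ of its
   vertices (sending the terminal vertex tau to the initial vertex iota) and put
   sig v = succ v - a; then sig v is v or v - h for every v other than tau. As Cay(G;a,b) has no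
   Hamiltonian cycle, on the coset tau + <h> the permutation sig is the single cycle
   tau -> tau + k h -> tau + (k-1) h -> ... -> tau + h -> tau for some 1 <= k <= m - 2, and every
   other coset of <h> is sig-invariant. The sign of sig does not depend on P, being that of a
   translation times that of a |G|-cycle.
   For a second, arc-disjoint path P' the two paths leave every vertex off {tau, tau'} along
   different arcs. This puts tau' = tau + d h in the same coset, and off that coset the
   restrictions of sig and sig' compose to the translation by -h, whose sign is +1 because
   |G : <h>| is odd. Comparing signs gives k = k' (mod 2). On the coset of tau every index
   other than 0 and d lies in exactly one of the runs {1..k} and {d+1..d+k'} (mod m), and since
   m is even this forces 2 d + k' = k + m, i.e. iota' + tau' = iota + tau. *)

section \<open>Multiples and additive order\<close>

primrec nsmul :: "nat \<Rightarrow> 'a::ab_group_add \<Rightarrow> 'a" where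
  "nsmul 0 x = 0"
| "nsmul (Suc n) x = x + nsmul n x"

lemma nsmul_add: "nsmul (i + j) x = nsmul i x + nsmul j x"
  by (induction i) (auto simp: algebra_simps)

lemma nsmul_uminus: "nsmul j (- x) = - nsmul j x"
  by (induction j) (auto simp: algebra_simps)

lemma nsmul_diff: "i \<le> j \<Longrightarrow> nsmul (j - i) x = nsmul j x - nsmul i x"
  using nsmul_add[of "j - i" i x] by simp

lemma nsmul_mult_eq_0: "nsmul m x = 0 \<Longrightarrow> nsmul (m * j) x = 0"
  by (induction j) (auto simp: nsmul_add)

lemma nsmul_mod: "nsmul m x = 0 \<Longrightarrow> nsmul (j mod m) x = nsmul j x"
  using nsmul_add[of "j mod m" "m * (j div m)" x] nsmul_mult_eq_0[of m x "j div m"] by simp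

lemma nsmul_pred: "0 < m \<Longrightarrow> nsmul m x = 0 \<Longrightarrow> nsmul (m - 1) x = - x"
  using nsmul.simps(2)[of "m - 1" x] by (simp add: add.commute eq_neg_iff_add_eq_0)

definition add_order :: "'a::{ab_group_add,finite} \<Rightarrow> nat" where
  "add_order c = (LEAST m. 0 < m \<and> nsmul m c = 0)"

lemma ex_nsmul_eq_0:
  fixes c :: "'a::{ab_group_add,finite}"
  shows "\<exists>m>0. nsmul m c = 0"
proof -
  have "\<not> inj (\<lambda>j::nat. nsmul j c)"
    using finite_imageD[of "\<lambda>j::nat. nsmul j c" UNIV] by auto
  then obtain i j :: nat where "i < j" "nsmul i c = nsmul j c"
    unfolding inj_def by (metis linorder_neqE_nat)
  then show ?thesis
    using nsmul_diff[of i j c] by (intro exI[of _ "j - i"]) simp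
qed

lemma add_order:
  fixes c :: "'a::{ab_group_add,finite}"
  shows add_order_pos: "0 < add_order c" and nsmul_add_order: "nsmul (add_order c) c = 0"
proof -
  have "0 < add_order c \<and> nsmul (add_order c) c = 0"
    unfolding add_order_def using ex_nsmul_eq_0 by (rule LeastI_ex)
  then show "0 < add_order c" "nsmul (add_order c) c = 0" by auto
qed

lemma nsmul_inj_below_add_order:
  fixes c :: "'a::{ab_group_add,finite}"
  assumes "i < add_order c" "j < add_order c" "nsmul i c = nsmul j c"
  shows "i = j"
proof -
  have False if "i < j" "j < add_order c" "nsmul i c = nsmul j c" for i j
  proof -
    have "0 < j - i \<and> nsmul (j - i) c = 0" "j - i < add_order c"
      using that nsmul_diff[of i j c] by auto
    then show False
      using not_less_Least[of "j - i" "\<lambda>m. 0 < m \<and> nsmul m c = 0"]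
      unfolding add_order_def by blast
  qed
  then show ?thesis
    using assms by (metis linorder_neqE_nat)
qed

lemma nsmul_mod_add_order:
  fixes c :: "'a::{ab_group_add,finite}"
  shows "nsmul (j mod add_order c) c = nsmul j c"
  by (rule nsmul_mod[OF nsmul_add_order])

lemma gen_subgroup_singleton:
  fixes c :: "'a::{ab_group_add,finite}"
  shows "gen_subgroup {c} = (\<lambda>j. nsmul j c) ` {..<add_order c}"
proof
  have multiple: "nsmul j c \<in> (\<lambda>j. nsmul j c) ` {..<add_order c}" for j
    using nsmul_mod_add_order[of j c] add_order_pos[of c]
    by (metis image_eqI lessThan_iff mod_less_divisor)
  show "gen_subgroup {c} \<subseteq> (\<lambda>j. nsmul j c) ` {..<add_order c}"
  proof
    fix x assume "x \<in> gen_subgroup {c}"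
    then show "x \<in> (\<lambda>j. nsmul j c) ` {..<add_order c}"
    proof (induction rule: gen_subgroup.induct)
      case (base x)
      then show ?case using multiple[of 1] by simp
    next
      case zero
      then show ?case using multiple[of 0] by simp
    next
      case (add x y)
      then show ?case using multiple by (auto simp flip: nsmul_add)
    next
      case (neg x)
      then obtain j where "x = nsmul j c" by blast
      then have "- x = nsmul (add_order c * j - j) c"
        using nsmul_diff[of j "add_order c * j" c] nsmul_mult_eq_0[OF nsmul_add_order]
          add_order_pos[of c] by simp
      then show ?case using multiple by simp
    qed
  qed
  have "nsmul j c \<in> gen_subgroup {c}" for j
    by (induction j) (auto intro: gen_subgroup.intros)
  then show "(\<lambda>j. nsmul j c) ` {..<add_order c} \<subseteq> gen_subgroup {c}" by blast
qed

lemma card_gen_subgroup_singleton: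
  fixes c :: "'a::{ab_group_add,finite}"
  shows "card (gen_subgroup {c}) = add_order c"
proof -
  have "inj_on (\<lambda>j. nsmul j c) {..<add_order c}"
    using nsmul_inj_below_add_order by (auto simp: inj_on_def)
  then show ?thesis by (simp add: gen_subgroup_singleton card_image)
qed

section \<open>Signs of cycles and of translations\<close>

lemma sign_cycle_of_list:
  "distinct cs \<Longrightarrow> sign (cycle_of_list cs) = (-1) ^ (length cs - 1)"
proof (induction cs rule: cycle_of_list.induct)
  case (1 i j cs)
  have "sign (cycle_of_list (i # j # cs)) = sign (transpose i j) * sign (cycle_of_list (j # cs))"
    by (simp add: sign_compose permutation_swap_id permutation_of_cycle)
  also have "\<dots> = (-1) * (-1) ^ (length (j # cs) - 1)"
    using 1 by (simp add: sign_swap_id)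
  finally show ?case by (simp add: o_def)
qed (auto simp: sign_id)

lemma cycle_of_list_nth:
  assumes "distinct cs" "i < length cs"
  shows "cycle_of_list cs (cs ! i) = cs ! (Suc i mod length cs)"
proof -
  have "map (cycle_of_list cs) cs = rotate1 cs"
    using cyclic_rotation[OF assms(1), of 1] by simp
  then have "map (cycle_of_list cs) cs ! i = rotate1 cs ! i" by simp
  then show ?thesis
    using assms by (simp add: nth_rotate1)
qed

definition progression :: "'a::ab_group_add \<Rightarrow> 'a \<Rightarrow> nat \<Rightarrow> 'a list" where
  "progression x c L = map (\<lambda>j. x + nsmul j c) [0..<L]"

lemma set_progression: "set (progression x c L) = (\<lambda>j. x + nsmul j c) ` {..<L}"
  by (auto simp: progression_def)

lemma cycle_of_list_progression:
  assumes "distinct (progression x c L)"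
  shows "cycle_of_list (progression x c L) y =
    (if y \<in> set (progression x c L) then (if y = x + nsmul (L - 1) c then x else y + c) else y)"
proof (cases "y \<in> set (progression x c L)")
  case False
  then show ?thesis by (simp add: id_outside_supp)
next
  case True
  then obtain i where i: "i < L" "y = progression x c L ! i"
    by (auto simp: progression_def)
  have len: "length (progression x c L) = L"
    by (simp add: progression_def)
  have step: "cycle_of_list (progression x c L) y = progression x c L ! (Suc i mod L)"
    using cycle_of_list_nth[OF assms, of i] i len by simp
  show ?thesis
  proof (cases "Suc i = L")
    case True
    then have "i = L - 1" "Suc i mod L = 0" by simp_all
    then show ?thesis using step i by (simp add: progression_def)
  next
    case False
    have "progression x c L ! (L - 1) \<noteq> progression x c L ! i"
      using nth_eq_iff_index_eq[OF assms, of "L - 1" i] len i False by auto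
    then have "y \<noteq> x + nsmul (L - 1) c"
      using i by (simp add: progression_def)
    then show ?thesis
      using step i False by (simp add: progression_def algebra_simps)
  qed
qed

lemma sign_cycle_of_progression:
  "distinct (progression x c L) \<Longrightarrow> sign (cycle_of_list (progression x c L)) = (-1) ^ (L - 1)"
  using sign_cycle_of_list[of "progression x c L"] by (simp add: progression_def)

lemma permutation_restrict_translation:
  fixes c :: "'a::{ab_group_add,finite}"
  assumes "\<forall>x\<in>U. x + c \<in> U"
  shows "permutation (restrict_id (\<lambda>x. x + c) U)"
proof -
  have "inj (restrict_id (\<lambda>x. x + c) U)"
  proof (rule injI)
    fix x y
    assume "restrict_id (\<lambda>x. x + c) U x = restrict_id (\<lambda>x. x + c) U y"
    then show "x = y"
      using assms by (cases "x \<in> U"; cases "y \<in> U") auto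
  qed
  then show ?thesis
    by (simp add: permutation finite_UNIV_inj_surj bij_def)
qed

lemma set_progression_add_order:
  fixes c :: "'a::{ab_group_add,finite}"
  shows "set (progression x c (add_order c)) = range (\<lambda>j. x + nsmul j c)"
proof -
  have "x + nsmul j c \<in> (\<lambda>j. x + nsmul j c) ` {..<add_order c}" for j
    using nsmul_mod_add_order[of j c] add_order_pos[of c]
    by (intro image_eqI[of _ _ "j mod add_order c"]) auto
  then show ?thesis
    unfolding set_progression by auto
qed

lemma distinct_progression_add_order:
  fixes c :: "'a::{ab_group_add,finite}"
  shows "distinct (progression x c (add_order c))"
proof -
  have "inj_on (\<lambda>j. x + nsmul j c) {0..<add_order c}"
    using nsmul_inj_below_add_order[of _ c] by (intro inj_onI) simp
  then show ?thesis
    by (simp add: progression_def distinct_map)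
qed

lemma plus_in_progression_add_order:
  fixes c :: "'a::{ab_group_add,finite}"
  shows "y + c \<in> set (progression x c (add_order c)) \<longleftrightarrow> y \<in> set (progression x c (add_order c))"
proof -
  have "nsmul (add_order c - 1) c = - c"
    using nsmul_pred[OF add_order_pos[of c] nsmul_add_order[of c]] .
  then have "y + c = x + nsmul j c \<longleftrightarrow> y = x + nsmul (j + (add_order c - 1)) c" for j
    by (auto simp: nsmul_add algebra_simps)
  moreover have "y = x + nsmul j c \<longleftrightarrow> y + c = x + nsmul (Suc j) c" for j
    by (auto simp: algebra_simps)
  ultimately show ?thesis
    unfolding set_progression_add_order by blast
qed

lemma restrict_translation_split:
  fixes c :: "'a::{ab_group_add,finite}"
  assumes closed: "\<forall>y\<in>U. y + c \<in> U" and "x \<in> U"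
  defines "cs \<equiv> progression x c (add_order c)"
  shows "set cs \<subseteq> U"
    and "restrict_id (\<lambda>y. y + c) U = cycle_of_list cs \<circ> restrict_id (\<lambda>y. y + c) (U - set cs)"
proof -
  have "x + nsmul j c \<in> U" for j
  proof (induction j)
    case (Suc j)
    then have "x + nsmul j c + c \<in> U" using closed by blast
    then show ?case by (simp add: algebra_simps)
  qed (use \<open>x \<in> U\<close> in simp)
  then show cs_U: "set cs \<subseteq> U"
    by (auto simp: cs_def set_progression_add_order)
  have last_cs: "x + nsmul (add_order c - 1) c + c = x"
    using nsmul_pred[OF add_order_pos[of c] nsmul_add_order[of c]] by simp
  note cyc = cycle_of_list_progression[OF distinct_progression_add_order[of x c], folded cs_def]
  show "restrict_id (\<lambda>y. y + c) U = cycle_of_list cs \<circ> restrict_id (\<lambda>y. y + c) (U - set cs)"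
  proof
    fix y
    consider "y \<in> set cs" | "y \<in> U - set cs" | "y \<notin> U"
      by blast
    then show "restrict_id (\<lambda>y. y + c) U y = (cycle_of_list cs \<circ> restrict_id (\<lambda>y. y + c) (U - set cs)) y"
    proof cases
      case 1
      then show ?thesis using cs_U last_cs cyc[of y] by auto
    next
      case 2
      then have "y + c \<notin> set cs"
        using plus_in_progression_add_order by (auto simp: cs_def)
      then show ?thesis using 2 cyc[of "y + c"] by auto
    next
      case 3
      then show ?thesis using cs_U cyc[of y] by auto
    qed
  qed
qed

text \<open>A translation-invariant set is a disjoint union of cosets of the cyclic subgroup, and on
  each of them the translation acts as one cycle of length equal to the order of c.\<close>

lemma restrict_translation_card_sign:
  fixes c :: "'a::{ab_group_add,finite}"
  assumes "\<forall>x\<in>U. x + c \<in> U"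
  shows "add_order c dvd card U \<and>
    sign (restrict_id (\<lambda>x. x + c) U) = (-1) ^ ((add_order c - 1) * (card U div add_order c))"
  using assms
proof (induction "card U" arbitrary: U rule: less_induct)
  case less
  define m where "m = add_order c"
  show ?case
  proof (cases "U = {}")
    case True
    then have "restrict_id (\<lambda>x. x + c) U = id" by (auto simp: restrict_id_def)
    then show ?thesis using True by simp
  next
    case False
    then obtain x where "x \<in> U" by blast
    define cs where "cs = progression x c (add_order c)"
    define U' where "U' = U - set cs"
    note split = restrict_translation_split[OF less.prems \<open>x \<in> U\<close>, folded cs_def U'_def]
    have dist: "distinct cs"
      using distinct_progression_add_order by (simp add: cs_def m_def)
    have closed': "\<forall>y\<in>U'. y + c \<in> U'"
      using less.prems plus_in_progression_add_order by (auto simp: U'_def cs_def m_def)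
    have card_U: "card U = m + card U'"
      using split(1) distinct_card[OF dist] card_Diff_subset[of "set cs" U] card_mono[of U "set cs"]
      by (simp add: U'_def cs_def progression_def m_def)
    have "0 < m" using add_order_pos by (simp add: m_def)
    then have IH: "m dvd card U' \<and>
        sign (restrict_id (\<lambda>x. x + c) U') = (-1) ^ ((m - 1) * (card U' div m))"
      using less.hyps[of U'] closed' card_U by (simp add: m_def)
    have "sign (cycle_of_list cs) = (-1) ^ (m - 1)"
      using sign_cycle_of_progression dist by (simp add: cs_def m_def)
    then have "sign (restrict_id (\<lambda>x. x + c) U) = (-1) ^ (m - 1) * (-1) ^ ((m - 1) * (card U' div m))"
      unfolding split(2) using IH closed'
      by (simp add: sign_compose permutation_of_cycle permutation_restrict_translation)
    also have "\<dots> = (-1) ^ ((m - 1) * (card U div m))"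
    proof -
      have "card U div m = Suc (card U' div m)"
        using card_U \<open>0 < m\<close> by (simp add: div_add_self1)
      then show ?thesis by (simp add: power_add)
    qed
    finally show ?thesis
      using IH card_U by (simp add: m_def)
  qed
qed

lemma add_order_uminus:
  fixes c :: "'a::{ab_group_add,finite}"
  shows "add_order (- c) = add_order c"
  by (simp add: add_order_def nsmul_uminus)

lemma add_order_dvd_card:
  fixes c :: "'a::{ab_group_add,finite}"
  shows "add_order c dvd card (UNIV :: 'a set)"
  using restrict_translation_card_sign[of UNIV c] by simp

lemma even_add_order:
  fixes c :: "'a::{ab_group_add,finite}"
  assumes "even (card (UNIV :: 'a set))" "odd (card (UNIV :: 'a set) div add_order c)"
  shows "even (add_order c)"
  using assms add_order_dvd_card[of c] by (metis dvd_mult_div_cancel even_mult_iff)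

section \<open>Complementary runs on a cycle\<close>

lemma complementary_runs_cases:
  fixes m k k' d :: nat
  assumes "1 \<le> k" "k + 2 \<le> m" "1 \<le> k'" "k' + 2 \<le> m" "d < m"
    and above: "\<And>j. d < j \<Longrightarrow> j < m \<Longrightarrow> j \<le> k \<longleftrightarrow> \<not> j - d \<le> k'"
    and below: "\<And>j. 1 \<le> j \<Longrightarrow> j < d \<Longrightarrow> j \<le> k \<longleftrightarrow> \<not> j + m - d \<le> k'"
  shows "d = k \<and> m \<le> k + k' + 1 \<and> k + k' \<le> m \<or> d = k + 1 \<and> m \<le> k + k' + 2 \<and> k + k' + 1 \<le> m"
proof -
  have "\<not> d < k"
  proof
    assume "d < k"
    then show False using above[of "d + 1"] assms(1-4) by simp
  qed
  moreover have "\<not> k + 2 \<le> d"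
  proof
    assume "k + 2 \<le> d"
    then have "d - 1 \<le> k \<longleftrightarrow> \<not> d - 1 + m - d \<le> k'"
      using below[of "d - 1"] by simp
    then show False using \<open>k + 2 \<le> d\<close> assms(4,5) by arith
  qed
  moreover have "m \<le> k + k' + 1 \<and> k + k' \<le> m" if "d = k"
  proof
    have "m - 1 \<le> k \<longleftrightarrow> \<not> m - 1 - d \<le> k'"
      using above[of "m - 1"] that assms(2) by simp
    then show "m \<le> k + k' + 1"
      using that assms(2) by arith
    show "k + k' \<le> m"
    proof (cases "k = 1")
      case False
      then have "1 \<le> k \<longleftrightarrow> \<not> 1 + m - d \<le> k'"
        using below[of 1] that assms(1) by simp
      then show ?thesis using that assms(1) by arith
    qed (use assms(4) in simp)
  qed
  moreover have "m \<le> k + k' + 2 \<and> k + k' + 1 \<le> m" if "d = k + 1"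
  proof
    have "1 \<le> k \<longleftrightarrow> \<not> 1 + m - d \<le> k'"
      using below[of 1] that assms(1) by simp
    then show "k + k' + 1 \<le> m"
      using that assms(1) by arith
    show "m \<le> k + k' + 2"
    proof (cases "k + 2 = m")
      case False
      then have "m - 1 \<le> k \<longleftrightarrow> \<not> m - 1 - d \<le> k'"
        using above[of "m - 1"] that assms(2) by simp
      then show ?thesis using that assms(2) False by arith
    qed simp
  qed
  ultimately show ?thesis
    by (cases "d = k") auto
qed

text \<open>The parity hypotheses exclude the solutions with k + k' = m - 1.\<close>

lemma complementary_runs_arith:
  fixes m k k' d :: nat
  assumes "even m" "even (k + k')" "1 \<le> k" "k + 2 \<le> m" "1 \<le> k'" "k' + 2 \<le> m" "d < m"
    and compl: "\<And>j. 1 \<le> j \<Longrightarrow> j < m \<Longrightarrow> j \<noteq> d \<Longrightarrow> j \<le> k \<longleftrightarrow> \<not> (j + m - d) mod m \<le> k'"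
  shows "2 * d + k' = k + m"
proof -
  have above: "j \<le> k \<longleftrightarrow> \<not> j - d \<le> k'" if "d < j" "j < m" for j
  proof -
    have "j + m - d = (j - d) + m"
      using that by simp
    then have "(j + m - d) mod m = j - d"
      unfolding \<open>j + m - d = (j - d) + m\<close> mod_add_self2 using that by simp
    then show ?thesis using compl[of j] that by simp
  qed
  have below: "j \<le> k \<longleftrightarrow> \<not> j + m - d \<le> k'" if "1 \<le> j" "j < d" for j
    using compl[of j] that \<open>d < m\<close> by simp
  show ?thesis
    using complementary_runs_cases[OF assms(3-7) above below] assms(1,2) by presburger
qed

section \<open>A Hamiltonian path in a Cayley digraph without Hamiltonian cycle\<close>

locale noncyclic_ham_path =
  fixes a b :: "'g::{ab_group_add,finite}" and P :: "'g list"
  assumes a_neq_b: "a \<noteq> b"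
    and ham_path: "ham_path a b P"
    and no_ham_cycle: "\<not> (\<exists>C. ham_cycle a b C)"
begin

abbreviation h :: 'g where "h \<equiv> a - b"
abbreviation m :: nat where "m \<equiv> add_order h"

definition tau :: 'g where "tau = last P"
definition iota :: 'g where "iota = hd P"
definition succ :: "'g \<Rightarrow> 'g" where "succ = cycle_of_list P"

text \<open>Off tau, sig v = v if P leaves v along an a-arc and sig v = v - h if along a b-arc.\<close>
definition sig :: "'g \<Rightarrow> 'g" where "sig v = succ v - a"

definition coset_pt :: "nat \<Rightarrow> 'g" where "coset_pt j = tau + nsmul j h"
definition tau_coset :: "'g set" where "tau_coset = coset_pt ` {..<m}"

lemma distinct_P: "distinct P" and set_P: "set P = UNIV"
  using ham_path by (auto simp: ham_path_def)

lemma P_nonempty: "P \<noteq> []"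
  using set_P by auto

lemma length_P: "length P = card (UNIV :: 'g set)"
  using distinct_card[OF distinct_P] set_P by simp

lemma succ_nth: "Suc i < length P \<Longrightarrow> succ (P ! i) = P ! Suc i"
  using cycle_of_list_nth[OF distinct_P, of i] by (simp add: succ_def)

lemma succ_tau: "succ tau = iota"
proof -
  have "length P - 1 < length P" "Suc (length P - 1) = length P"
    using P_nonempty by simp_all
  then show ?thesis
    using cycle_of_list_nth[OF distinct_P, of "length P - 1"] P_nonempty
    by (simp add: succ_def tau_def iota_def last_conv_nth hd_conv_nth)
qed

lemma sign_succ: "sign succ = (-1) ^ (card (UNIV :: 'g set) - 1)"
  using sign_cycle_of_list[OF distinct_P] length_P by (simp add: succ_def)

lemma index_before_tauE:
  assumes "y \<noteq> tau"
  obtains i where "Suc i < length P" "P ! i = y"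
proof -
  obtain i where i: "i < length P" "P ! i = y"
    using set_P by (metis UNIV_I in_set_conv_nth)
  have "i \<noteq> length P - 1"
    using assms i P_nonempty by (auto simp: tau_def last_conv_nth)
  then have "Suc i < length P" using i by simp
  then show ?thesis using i that by blast
qed

lemma succ_in_path_arcs: "y \<noteq> tau \<Longrightarrow> (y, succ y) \<in> path_arcs P"
  by (erule index_before_tauE) (auto simp: path_arcs_def succ_nth)

lemma cay_arc_succ: "y \<noteq> tau \<Longrightarrow> cay_arc a b y (succ y)"
proof (erule index_before_tauE)
  fix i assume "Suc i < length P" "P ! i = y"
  then show "cay_arc a b y (succ y)"
    using ham_path succ_nth unfolding ham_path_def by auto
qed

lemma sig_cases: "y \<noteq> tau \<Longrightarrow> sig y = y \<or> sig y = y - h"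
  using cay_arc_succ[of y] by (auto simp: cay_arc_def sig_def algebra_simps)

lemma sig_eq_comp: "sig = (\<lambda>x. x - a) \<circ> succ"
  by (simp add: sig_def fun_eq_iff)

lemma permutation_sig: "permutation sig"
  unfolding sig_eq_comp succ_def
  by (intro permutation_compose permutation_of_cycle) (simp add: permutation bij_diff_right)

lemma sign_sig: "sign sig = sign (\<lambda>x::'g. x - a) * (-1) ^ (card (UNIV :: 'g set) - 1)"
  unfolding sig_eq_comp sign_succ[symmetric] succ_def
  by (intro sign_compose permutation_of_cycle) (simp add: permutation bij_diff_right)

lemma h_neq_0: "h \<noteq> 0"
  using a_neq_b by simp

lemma iota_not_arc_from_tau: "iota \<noteq> tau + a" "iota \<noteq> tau + b"
proof -
  have "\<not> cay_arc a b tau iota"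
    using no_ham_cycle ham_path P_nonempty by (auto simp: ham_cycle_def tau_def iota_def)
  then show "iota \<noteq> tau + a" "iota \<noteq> tau + b"
    by (auto simp: cay_arc_def)
qed

text \<open>Since sig is injective and y - h is already hit from y, the vertex y - h cannot be
  fixed by sig, so a b-arc forces another b-arc one step down the coset of h.\<close>

lemma sig_shift_propagates:
  assumes "y \<noteq> tau" "sig y = y - h" "y - h \<noteq> tau"
  shows "sig (y - h) = y - h - h"
proof -
  have "y - h \<noteq> y"
    using h_neq_0 by simp
  then have "sig (y - h) \<noteq> sig y"
    using bij_is_inj[OF permutation_bijective[OF permutation_sig]] by (meson injD)
  then show ?thesis
    using sig_cases[OF assms(3)] assms(2) by auto
qed

lemma sig_shift_propagates_iter:
  assumes "y \<noteq> tau" "sig y = y - h" "\<forall>i\<le>n. y - nsmul i h \<noteq> tau"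
  shows "sig (y - nsmul n h) = y - nsmul n h - h"
  using assms(3)
proof (induction n)
  case 0
  then show ?case using assms(2) by simp
next
  case (Suc n)
  have step: "y - nsmul (Suc n) h = y - nsmul n h - h"
    by (simp add: algebra_simps)
  have "y - nsmul n h \<noteq> tau" "y - nsmul n h - h \<noteq> tau"
    using Suc.prems step by (metis le_SucI order_refl)+
  with Suc have "sig (y - nsmul n h - h) = y - nsmul n h - h - h"
    by (intro sig_shift_propagates) simp_all
  then show ?case unfolding step .
qed

lemma coset_pt_0: "coset_pt 0 = tau"
  by (simp add: coset_pt_def)

lemma coset_pt_Suc: "coset_pt (Suc j) = coset_pt j + h"
  by (simp add: coset_pt_def algebra_simps)

lemma coset_pt_mod: "coset_pt (j mod m) = coset_pt j"
  by (simp add: coset_pt_def nsmul_mod_add_order)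

lemma coset_pt_add_m: "coset_pt (j + m) = coset_pt j"
  using coset_pt_mod[of "j + m"] coset_pt_mod[of j] by simp

lemma coset_pt_inj: "i < m \<Longrightarrow> j < m \<Longrightarrow> coset_pt i = coset_pt j \<Longrightarrow> i = j"
  using nsmul_inj_below_add_order by (simp add: coset_pt_def)

lemma coset_pt_diff: "i \<le> j \<Longrightarrow> coset_pt j - nsmul i h = coset_pt (j - i)"
  using nsmul_diff[of i j h] by (simp add: coset_pt_def algebra_simps)

lemma coset_pt_in_tau_coset: "coset_pt j \<in> tau_coset"
  unfolding tau_coset_def using coset_pt_mod[of j] add_order_pos[of h]
  by (metis image_eqI lessThan_iff mod_less_divisor)

lemma coset_pt_neq_tau: "1 \<le> j \<Longrightarrow> j < m \<Longrightarrow> coset_pt j \<noteq> tau"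
  using coset_pt_inj[of j 0] coset_pt_0 add_order_pos[of h] by auto

lemma card_tau_coset: "card tau_coset = m"
proof -
  have "inj_on coset_pt {..<m}"
    using coset_pt_inj by (auto simp: inj_on_def)
  then show ?thesis by (simp add: tau_coset_def card_image)
qed

lemma minus_h_notin_tau_coset: "y \<notin> tau_coset \<Longrightarrow> y - h \<notin> tau_coset"
proof
  assume "y \<notin> tau_coset" "y - h \<in> tau_coset"
  then obtain j where "y - h = coset_pt j" by (auto simp: tau_coset_def)
  then have "y = coset_pt (Suc j)" by (simp add: coset_pt_Suc algebra_simps)
  then show False using \<open>y \<notin> tau_coset\<close> coset_pt_in_tau_coset by simp
qed

lemma coset_pt_add: "coset_pt i + coset_pt j = coset_pt 0 + coset_pt (i + j)"
  by (simp add: coset_pt_def nsmul_add algebra_simps)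

lemma iota_eq_sig_tau: "iota = sig tau + a"
  by (simp add: sig_def succ_tau)

text \<open>On the coset of tau, P leaves exactly coset_pt 1, ..., coset_pt k along b-arcs, and
  sig closes the run by sending tau to coset_pt k.\<close>

definition b_run :: "nat \<Rightarrow> bool" where
  "b_run k \<longleftrightarrow> 1 \<le> k \<and> k + 2 \<le> m \<and> sig tau = coset_pt k \<and>
     (\<forall>j. 1 \<le> j \<longrightarrow> j < m \<longrightarrow> (sig (coset_pt j) \<noteq> coset_pt j \<longleftrightarrow> j \<le> k))"

lemma sig_moved_downward:
  assumes "1 \<le> j" "j \<le> k" "k < m" "sig (coset_pt k) \<noteq> coset_pt k"
  shows "sig (coset_pt j) \<noteq> coset_pt j"
proof -
  have k_neq_tau: "coset_pt k \<noteq> tau"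
    using assms coset_pt_neq_tau by simp
  then have "sig (coset_pt k) = coset_pt k - h"
    using sig_cases assms(4) by blast
  moreover have "\<forall>i\<le>k - j. coset_pt k - nsmul i h \<noteq> tau"
    using coset_pt_diff coset_pt_neq_tau assms by auto
  ultimately have "sig (coset_pt k - nsmul (k - j) h) = coset_pt k - nsmul (k - j) h - h"
    using sig_shift_propagates_iter[OF k_neq_tau] by blast
  then show ?thesis
    using coset_pt_diff[of "k - j" k] assms(2) h_neq_0 by simp
qed

lemma sig_tau_eq_coset_pt:
  assumes "k < m" and moved: "\<And>j. 1 \<le> j \<Longrightarrow> j < m \<Longrightarrow> sig (coset_pt j) \<noteq> coset_pt j \<longleftrightarrow> j \<le> k"
  shows "sig tau = coset_pt k"
proof (rule ccontr)
  assume "sig tau \<noteq> coset_pt k"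
  obtain y where y: "sig y = coset_pt k"
    using permutation_bijective[OF permutation_sig] by (metis bij_pointE)
  with \<open>sig tau \<noteq> coset_pt k\<close> have "y \<noteq> tau" by auto
  then consider "sig y = y" | "sig y = y - h"
    using sig_cases by blast
  then show False
  proof cases
    case 1
    then have "y = coset_pt k" using y by simp
    then show False
      using \<open>y \<noteq> tau\<close> 1 moved[of k] assms(1) coset_pt_0 by (cases "k = 0") auto
  next
    case 2
    then have y_Suc: "y = coset_pt (Suc k)"
      using y by (simp add: coset_pt_Suc algebra_simps)
    show False
    proof (cases "Suc k < m")
      case True
      then show False using moved[of "Suc k"] 2 y_Suc h_neq_0 by simp
    next
      case False
      then have "Suc k = 0 + m" using assms(1) by simp
      then show False
        using y_Suc coset_pt_add_m[of 0] coset_pt_0 \<open>y \<noteq> tau\<close> by metis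
    qed
  qed
qed

text \<open>Take k maximal among the indices moved by sig; the absence of a Hamiltonian cycle
  excludes k = 0 and k = m - 1.\<close>

lemma ex_b_run: "\<exists>k. b_run k"
proof -
  define D where "D = {j. 1 \<le> j \<and> j < m \<and> sig (coset_pt j) \<noteq> coset_pt j}"
  define k where "k = Max (insert 0 D)"
  have "finite D" by (simp add: D_def)
  then have le_k: "j \<in> D \<Longrightarrow> j \<le> k" for j
    by (simp add: k_def)
  have k_in: "k \<in> insert 0 D"
    unfolding k_def using \<open>finite D\<close> by (intro Max_in) auto
  then have "k < m" using add_order_pos[of h] by (auto simp: D_def)
  have moved: "sig (coset_pt j) \<noteq> coset_pt j \<longleftrightarrow> j \<le> k" if "1 \<le> j" "j < m" for j
    using that le_k k_in sig_moved_downward[of j k] \<open>k < m\<close> by (auto simp: D_def)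
  have sig_tau: "sig tau = coset_pt k"
    using sig_tau_eq_coset_pt \<open>k < m\<close> moved by blast
  have "k \<noteq> 0"
  proof
    assume "k = 0"
    then have "iota = tau + a"
      using iota_eq_sig_tau sig_tau coset_pt_0 by simp
    then show False using iota_not_arc_from_tau(1) by simp
  qed
  moreover have "k \<noteq> m - 1"
  proof
    assume "k = m - 1"
    then have "coset_pt k + h = tau"
      using coset_pt_Suc[of k] coset_pt_add_m[of 0] coset_pt_0 add_order_pos[of h] by simp
    then have "iota = tau + b"
      using iota_eq_sig_tau sig_tau by (simp add: algebra_simps)
    then show False using iota_not_arc_from_tau(2) by simp
  qed
  ultimately show ?thesis
    using \<open>k < m\<close> sig_tau moved unfolding b_run_def by (intro exI[of _ k]) auto
qed

lemma coset_pt_step_down: "i \<le> k \<Longrightarrow> coset_pt k + nsmul i (b - a) = coset_pt (k - i)"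
  using coset_pt_diff[of i k] nsmul_uminus[of i h] by simp

lemma set_progression_down:
  "set (progression (coset_pt k) (b - a) (Suc k)) = coset_pt ` {..k}"
proof -
  have "(\<lambda>i. coset_pt k + nsmul i (b - a)) ` {..<Suc k} = (\<lambda>i. coset_pt (k - i)) ` {..k}"
    using coset_pt_step_down by (auto simp: lessThan_Suc_atMost)
  also have "\<dots> = coset_pt ` (\<lambda>i. k - i) ` {..k}"
    by (simp add: image_image)
  also have "(\<lambda>i. k - i) ` {..k} = {..k}"
  proof -
    have "x \<in> (\<lambda>i. k - i) ` {..k}" if "x \<le> k" for x
      using that by (intro image_eqI[of x _ "k - x"]) auto
    then show ?thesis by auto
  qed
  finally show ?thesis
    by (simp add: set_progression)
qed

lemma distinct_progression_down:
  assumes "k < m"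
  shows "distinct (progression (coset_pt k) (b - a) (Suc k))"
proof -
  have "inj_on (\<lambda>i. coset_pt k + nsmul i (b - a)) {0..<Suc k}"
  proof (rule inj_onI)
    fix i i'
    assume "i \<in> {0..<Suc k}" "i' \<in> {0..<Suc k}"
      and "coset_pt k + nsmul i (b - a) = coset_pt k + nsmul i' (b - a)"
    then have "coset_pt (k - i) = coset_pt (k - i')" "i \<le> k" "i' \<le> k"
      using coset_pt_step_down[of i k] coset_pt_step_down[of i' k] by auto
    moreover have "k - i < m" "k - i' < m"
      using assms by auto
    ultimately show "i = i'"
      using coset_pt_inj[of "k - i" "k - i'"] by simp
  qed
  then show ?thesis
    by (simp add: progression_def distinct_map del: upt_Suc)
qed

lemma cycle_of_list_progression_down:
  assumes "k < m"
  shows "cycle_of_list (progression (coset_pt k) (b - a) (Suc k)) y =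
    (if y \<in> coset_pt ` {..k} then (if y = tau then coset_pt k else y - h) else y)"
  using cycle_of_list_progression[OF distinct_progression_down[OF assms], of y]
    coset_pt_step_down[of k k] coset_pt_0
  by (simp add: set_progression_down)

lemma coset_pt_in_run_iff:
  assumes "k < m" "j < m"
  shows "coset_pt j \<in> coset_pt ` {..k} \<longleftrightarrow> j \<le> k"
proof
  assume "coset_pt j \<in> coset_pt ` {..k}"
  then obtain i where "i \<le> k" "coset_pt i = coset_pt j" by auto
  moreover from this have "i = j"
    using assms by (intro coset_pt_inj) simp_all
  ultimately show "j \<le> k" by simp
qed simp

lemma sig_on_tau_coset:
  assumes "b_run k" "j < m"
  shows "sig (coset_pt j) = cycle_of_list (progression (coset_pt k) (b - a) (Suc k)) (coset_pt j)"
proof -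
  have "k < m" and sig_tau: "sig tau = coset_pt k"
    and moved: "\<And>j. 1 \<le> j \<Longrightarrow> j < m \<Longrightarrow> sig (coset_pt j) \<noteq> coset_pt j \<longleftrightarrow> j \<le> k"
    using assms(1) by (auto simp: b_run_def)
  note cyc = cycle_of_list_progression_down[OF \<open>k < m\<close>, of "coset_pt j"]
  note in_run = coset_pt_in_run_iff[OF \<open>k < m\<close> assms(2)]
  consider "j = 0" | "1 \<le> j" "j \<le> k" | "k < j" by linarith
  then show ?thesis
  proof cases
    case 1
    then show ?thesis using cyc in_run sig_tau coset_pt_0 by simp
  next
    case 2
    then have "coset_pt j \<noteq> tau" using assms(2) coset_pt_neq_tau by simp
    moreover have "sig (coset_pt j) \<noteq> coset_pt j" using moved[of j] 2 assms(2) by simp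
    ultimately have "sig (coset_pt j) = coset_pt j - h" using sig_cases by blast
    with 2 \<open>coset_pt j \<noteq> tau\<close> show ?thesis using cyc in_run by simp
  next
    case 3
    then show ?thesis using moved[of j] assms(2) cyc in_run by simp
  qed
qed

lemma sig_decomp:
  assumes "b_run k"
  shows "sig = cycle_of_list (progression (coset_pt k) (b - a) (Suc k)) \<circ> restrict_id sig (- tau_coset)"
proof
  fix y
  show "sig y = (cycle_of_list (progression (coset_pt k) (b - a) (Suc k)) \<circ> restrict_id sig (- tau_coset)) y"
  proof (cases "y \<in> tau_coset")
    case True
    then show ?thesis
      using sig_on_tau_coset[OF assms] by (auto simp: tau_coset_def)
  next
    case False
    have "k < m" using assms by (simp add: b_run_def)
    have "y \<noteq> tau"
      using False coset_pt_in_tau_coset[of 0] coset_pt_0 by auto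
    then have "sig y \<notin> tau_coset"
      using sig_cases[OF \<open>y \<noteq> tau\<close>] False minus_h_notin_tau_coset[OF False] by auto
    then have "sig y \<notin> coset_pt ` {..k}"
      using coset_pt_in_tau_coset by auto
    then show ?thesis
      using False cycle_of_list_progression_down[OF \<open>k < m\<close>, of "sig y"] by simp
  qed
qed

lemma sign_sig_b_run:
  assumes "b_run k"
  shows "permutation (restrict_id sig (- tau_coset))"
    and "sign sig = (-1) ^ k * sign (restrict_id sig (- tau_coset))"
proof -
  define cyc where "cyc = cycle_of_list (progression (coset_pt k) (b - a) (Suc k))"
  define r where "r = restrict_id sig (- tau_coset)"
  have "k < m" using assms by (simp add: b_run_def)
  have decomp: "sig = cyc \<circ> r"
    using sig_decomp[OF assms] by (simp add: cyc_def r_def)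
  have perm_cyc: "permutation cyc"
    by (simp add: cyc_def permutation_of_cycle)
  have "inv cyc \<circ> sig = r"
    unfolding decomp o_assoc permutation_inverse_works(1)[OF perm_cyc] by simp
  then have perm: "permutation r"
    using permutation_compose[OF permutation_inverse[OF perm_cyc] permutation_sig] by simp
  then show "permutation (restrict_id sig (- tau_coset))"
    by (simp add: r_def)
  have "sign sig = sign cyc * sign r"
    unfolding decomp by (rule sign_compose[OF perm_cyc perm])
  then show "sign sig = (-1) ^ k * sign (restrict_id sig (- tau_coset))"
    using sign_cycle_of_progression[OF distinct_progression_down[OF \<open>k < m\<close>]]
    by (simp add: cyc_def r_def)
qed

end

section \<open>Two arc-disjoint Hamiltonian paths\<close>

locale disjoint_ham_paths =
  A: noncyclic_ham_path a b P + B: noncyclic_ham_path a b P'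
  for a b :: "'g::{ab_group_add,finite}" and P P' :: "'g list" +
  assumes arcs_disjoint: "path_arcs P \<inter> path_arcs P' = {}"
begin

lemma sig_complementary:
  assumes "y \<noteq> A.tau" "y \<noteq> B.tau"
  shows "B.sig y = y \<longleftrightarrow> A.sig y \<noteq> y"
proof -
  have "A.succ y \<noteq> B.succ y"
    using A.succ_in_path_arcs[OF assms(1)] B.succ_in_path_arcs[OF assms(2)] arcs_disjoint by auto
  then have "A.sig y \<noteq> B.sig y"
    by (simp add: A.sig_def B.sig_def)
  then show ?thesis
    using A.sig_cases[OF assms(1)] B.sig_cases[OF assms(2)] by auto
qed

lemma B_tau_in_tau_coset: "B.tau \<in> A.tau_coset"
proof (rule ccontr)
  assume notin: "B.tau \<notin> A.tau_coset"
  obtain k where "A.b_run k" using A.ex_b_run ..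
  then have k: "1 \<le> k" "k + 2 \<le> A.m"
    and moved: "\<And>j. 1 \<le> j \<Longrightarrow> j < A.m \<Longrightarrow> A.sig (A.coset_pt j) \<noteq> A.coset_pt j \<longleftrightarrow> j \<le> k"
    by (auto simp: A.b_run_def)
  have not_B_tau: "A.coset_pt j \<noteq> B.tau" for j
    using A.coset_pt_in_tau_coset[of j] notin by auto
  have B_moved: "B.sig (A.coset_pt j) \<noteq> A.coset_pt j \<longleftrightarrow> \<not> j \<le> k" if "1 \<le> j" "j < A.m" for j
    using sig_complementary[OF A.coset_pt_neq_tau[OF that] not_B_tau] moved[OF that] by simp
  have "1 \<le> A.m - 1" "A.m - 1 < A.m" "\<not> A.m - 1 \<le> k"
    using k by auto
  then have "B.sig (A.coset_pt (A.m - 1)) \<noteq> A.coset_pt (A.m - 1)"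
    using B_moved by blast
  then have "B.sig (A.coset_pt (A.m - 1)) = A.coset_pt (A.m - 1) - A.h"
    using B.sig_cases[OF not_B_tau] by blast
  moreover have "\<forall>i\<le>A.m - 2. A.coset_pt (A.m - 1) - nsmul i A.h \<noteq> B.tau"
    using not_B_tau A.coset_pt_diff by simp
  ultimately have "B.sig (A.coset_pt (A.m - 1) - nsmul (A.m - 2) A.h) =
      A.coset_pt (A.m - 1) - nsmul (A.m - 2) A.h - A.h"
    by (rule B.sig_shift_propagates_iter[OF not_B_tau])
  moreover have "A.coset_pt (A.m - 1) - nsmul (A.m - 2) A.h = A.coset_pt 1"
    using A.coset_pt_diff[of "A.m - 2" "A.m - 1"] k by (simp add: numeral_2_eq_2)
  ultimately show False
    using B_moved[of 1] k A.h_neq_0 by simp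
qed

lemma B_tau_coset_ptE:
  obtains d where "d < A.m" "B.tau = A.coset_pt d"
  using B_tau_in_tau_coset by (auto simp: A.tau_coset_def)

lemma B_coset_pt: "B.tau = A.coset_pt d \<Longrightarrow> B.coset_pt i = A.coset_pt (d + i)"
  by (simp add: A.coset_pt_def B.coset_pt_def nsmul_add algebra_simps)

lemma B_tau_coset: "B.tau_coset = A.tau_coset"
proof (rule card_subset_eq)
  obtain d where "B.tau = A.coset_pt d" by (rule B_tau_coset_ptE)
  then show "B.tau_coset \<subseteq> A.tau_coset"
    using B_coset_pt A.coset_pt_in_tau_coset by (auto simp: B.tau_coset_def)
qed (simp_all add: A.card_tau_coset B.card_tau_coset)

text \<open>Off the coset of tau, P and P' take complementary arcs, so the two restrictions of sig
  compose to the translation by b - a there.\<close>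

lemma restrict_sig_comp:
  "restrict_id A.sig (- A.tau_coset) \<circ> restrict_id B.sig (- A.tau_coset) =
    restrict_id (\<lambda>x. x + (b - a)) (- A.tau_coset)"
proof
  fix y
  show "(restrict_id A.sig (- A.tau_coset) \<circ> restrict_id B.sig (- A.tau_coset)) y =
      restrict_id (\<lambda>x. x + (b - a)) (- A.tau_coset) y"
  proof (cases "y \<in> A.tau_coset")
    case False
    have not_taus: "x \<noteq> A.tau" "x \<noteq> B.tau" if "x \<notin> A.tau_coset" for x
      using that B_tau_in_tau_coset A.coset_pt_in_tau_coset[of 0] A.coset_pt_0 by auto
    have shift: "y + (b - a) = y - A.h" by simp
    have y_h: "y - A.h \<notin> A.tau_coset"
      using A.minus_h_notin_tau_coset[OF False] .
    show ?thesis
    proof (cases "B.sig y = y")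
      case True
      then have "A.sig y = y - A.h"
        using sig_complementary[OF not_taus[OF False]] A.sig_cases[OF not_taus(1)[OF False]] by auto
      then show ?thesis using True False shift by simp
    next
      case False': False
      then have B_y: "B.sig y = y - A.h"
        using B.sig_cases[OF not_taus(2)[OF False]] by simp
      have "B.sig (y - A.h) = y - A.h - A.h"
        by (rule B.sig_shift_propagates[OF not_taus(2)[OF False] B_y not_taus(2)[OF y_h]])
      then have "A.sig (y - A.h) = y - A.h"
        using sig_complementary[OF not_taus[OF y_h]] A.h_neq_0 by simp
      then show ?thesis using B_y False y_h shift by simp
    qed
  qed simp
qed

lemma sign_restrict_translation_outside:
  assumes "odd (card (UNIV :: 'g set) div A.m)"
  shows "sign (restrict_id (\<lambda>x. x + (b - a)) (- A.tau_coset)) = 1"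
proof -
  define n where "n = card (UNIV :: 'g set) div A.m"
  have order: "add_order (b - a) = A.m"
    using add_order_uminus[of "a - b"] by simp
  have "card (UNIV :: 'g set) = A.m * n"
    using add_order_dvd_card[of "a - b"] by (simp add: n_def)
  moreover have "card (- A.tau_coset) = card (UNIV :: 'g set) - card A.tau_coset"
    by (simp add: Compl_eq_Diff_UNIV card_Diff_subset)
  ultimately have "card (- A.tau_coset) = A.m * (n - 1)"
    by (simp add: A.card_tau_coset diff_mult_distrib2)
  then have "card (- A.tau_coset) div A.m = n - 1"
    using add_order_pos[of "a - b"] by simp
  moreover have "\<forall>x\<in>- A.tau_coset. x + (b - a) \<in> - A.tau_coset"
  proof
    fix x assume "x \<in> - A.tau_coset"
    then have "x - A.h \<notin> A.tau_coset" using A.minus_h_notin_tau_coset by simp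
    moreover have "x + (b - a) = x - A.h" by simp
    ultimately show "x + (b - a) \<in> - A.tau_coset" by (metis ComplI)
  qed
  ultimately have "sign (restrict_id (\<lambda>x. x + (b - a)) (- A.tau_coset)) = (-1) ^ ((A.m - 1) * (n - 1))"
    using restrict_translation_card_sign[of "- A.tau_coset" "b - a"] order by simp
  also have "\<dots> = 1"
    using assms by (simp add: n_def)
  finally show ?thesis .
qed

lemma even_b_run_sum:
  assumes "odd (card (UNIV :: 'g set) div A.m)" "A.b_run k" "B.b_run k'"
  shows "even (k + k')"
proof -
  define rA where "rA = restrict_id A.sig (- A.tau_coset)"
  define rB where "rB = restrict_id B.sig (- A.tau_coset)"
  note signA = A.sign_sig_b_run[OF assms(2), folded rA_def]
  note signB = B.sign_sig_b_run[OF assms(3), unfolded B_tau_coset, folded rB_def]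
  have "sign rA * sign rB = 1"
    using sign_compose[OF signA(1) signB(1)] restrict_sig_comp
      sign_restrict_translation_outside[OF assms(1)] by (simp add: rA_def rB_def)
  then have "sign rB = sign rA"
    using sign_left_idempotent[of rA rB] by simp
  moreover have "(-1) ^ k * sign rA = (-1) ^ k' * sign rB"
    using signA(2) signB(2) A.sign_sig B.sign_sig by simp
  ultimately have "((-1) ^ k :: int) = (-1) ^ k'"
    by simp
  then show ?thesis
    by (simp add: minus_one_power_iff split: if_splits)
qed

lemma b_runs_complementary:
  assumes "A.b_run k" "B.b_run k'" "B.tau = A.coset_pt d" "d < A.m"
    and j: "1 \<le> j" "j < A.m" "j \<noteq> d"
  shows "j \<le> k \<longleftrightarrow> \<not> (j + A.m - d) mod A.m \<le> k'"
proof -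
  define i where "i = (j + A.m - d) mod A.m"
  have "i < A.m" using add_order_pos[of "a - b"] by (simp add: i_def)
  have "(d + i) mod A.m = (d + (j + A.m - d)) mod A.m"
    by (simp add: i_def mod_add_right_eq)
  also have "d + (j + A.m - d) = j + A.m" using assms(4) by simp
  finally have "B.coset_pt i = A.coset_pt j"
    using B_coset_pt[OF assms(3)] A.coset_pt_mod A.coset_pt_add_m by metis
  have "A.coset_pt j \<noteq> B.tau"
    using assms(3,4) j A.coset_pt_inj[of j d] by auto
  have "i \<noteq> 0"
  proof
    assume "i = 0"
    then show False
      using \<open>A.coset_pt j \<noteq> B.tau\<close> \<open>B.coset_pt i = A.coset_pt j\<close> B.coset_pt_0 by simp
  qed
  have "A.sig (A.coset_pt j) \<noteq> A.coset_pt j \<longleftrightarrow> j \<le> k"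
    using assms(1) j by (simp add: A.b_run_def)
  moreover have "B.sig (B.coset_pt i) \<noteq> B.coset_pt i \<longleftrightarrow> i \<le> k'"
    using assms(2) \<open>i \<noteq> 0\<close> \<open>i < A.m\<close> by (simp add: B.b_run_def)
  ultimately show ?thesis
    using sig_complementary[OF A.coset_pt_neq_tau[OF j(1,2)] \<open>A.coset_pt j \<noteq> B.tau\<close>]
      \<open>B.coset_pt i = A.coset_pt j\<close> by (auto simp: i_def)
qed

theorem endpoint_sums_eq:
  assumes "even (card (UNIV :: 'g set))" "odd (card (UNIV :: 'g set) div A.m)"
  shows "hd P' + last P' = hd P + last P"
proof -
  obtain k k' where runs: "A.b_run k" "B.b_run k'"
    using A.ex_b_run B.ex_b_run by blast
  obtain d where d: "d < A.m" "B.tau = A.coset_pt d"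
    by (rule B_tau_coset_ptE)
  have "2 * d + k' = k + A.m"
    using even_add_order[OF assms] runs(1,2)[unfolded A.b_run_def B.b_run_def] d(1)
      even_b_run_sum[OF assms(2) runs] b_runs_complementary[OF runs d(2,1)]
    by (intro complementary_runs_arith) auto
  have "hd P' + last P' = A.coset_pt (d + k') + A.coset_pt d + a"
    using B.iota_eq_sig_tau runs(2) B_coset_pt[OF d(2)] d(2)
    by (simp add: B.iota_def B.tau_def B.b_run_def algebra_simps)
  also have "\<dots> = A.coset_pt 0 + A.coset_pt (k + A.m) + a"
  proof -
    have "d + k' + d = k + A.m" using \<open>2 * d + k' = k + A.m\<close> by simp
    then show ?thesis using A.coset_pt_add[of "d + k'" d] by simp
  qed
  also have "\<dots> = hd P + last P"
    using A.iota_eq_sig_tau runs(1) A.coset_pt_add_m A.coset_pt_0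
    by (simp add: A.iota_def A.tau_def A.b_run_def algebra_simps)
  finally show ?thesis .
qed

end

theorem mainTheorem10:
  fixes a b :: "'g::{ab_group_add,finite}"
    and P P' :: "'g list"
  assumes "a \<noteq> b"
    and "gen_subgroup {a, b} = UNIV"
    and "\<not> (\<exists>C. ham_cycle a b C)"
    and "even (card (UNIV :: 'g set))"
    and "odd (subgroup_index (gen_subgroup {a - b}))"
    and "ham_path a b P" and "ham_path a b P'"
    and "path_arcs P \<inter> path_arcs P' = {}"
  shows "hd P' + last P' = hd P + last P"
proof -
  interpret disjoint_ham_paths a b P P'
    using assms(1,3,6-8) by unfold_locales
  have "subgroup_index (gen_subgroup {a - b}) = card (UNIV :: 'g set) div add_order (a - b)"
    by (simp add: subgroup_index_def card_gen_subgroup_singleton)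
  then show ?thesis
    using endpoint_sums_eq assms(4,5) by simp
qed

end
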